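(* Let $A,B:(0,\infty)\to(0,\infty)$ be the functions $A=\tfrac r3\sqrt{1-r^{-3}}$, $B=\tfrac r{\sqrt3}$, where $r=r(t)\in(1,\infty)$ is determined by $\dot A=\tfrac12(1-A^2/B^2)$, $\dot B=A/B$ with $r\to1$ as $t\to0$. For the ODE system $$\dot f_+=\frac{f_+}{A}\Bigl(1-\frac{A^2}{B^2}-f_+\Bigr)+f_-^2\frac{A}{B^2},\qquad \dot f_-=\frac{2f_-}{A}(f_+-1),$$ the following subsets of $\mathbb{R}^2$ are forward-invariant (for $t>0$): (i) $H_\pm=\{(f_+,f_-):\pm f_->0\}$; (ii) $\mathcal{R}_\infty=\{(f_+,f_-): f_+>1,\ f_->1\}$; (iii) $\mathcal{R}_0=\{(f_+,f_-):\tfrac23<f_+<1,\ 0<f_-<1\}$.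
   Context: $A$ and $B$ are the metric coefficients of the Bryant–Salamon $G_2$-metric $dt^2+A^2\sum(e_i^+)^2+B^2\sum(e_i^-)^2$ on $\mathbf{S}(S^3)$, and the system is the $\mathrm{SU}(2)^3$-invariant $G_2$-instanton equation for $\mathrm{SU}(2)$-connections $f_+\sum_iE_i\otimes e_i^++f_-\sum_iE_i\otimes e_i^-$. *)

theory Defs
  imports "HOL-Analysis.Analysis"
begin

definition coefA :: "(real \<Rightarrow> real) \<Rightarrow> real \<Rightarrow> real" where
  "coefA r t = r t / 3 * sqrt (1 - 1 / (r t) ^ 3)"

definition coefB :: "(real \<Rightarrow> real) \<Rightarrow> real \<Rightarrow> real" where
  "coefB r t = r t / sqrt 3"

definition instanton_solution ::
  "(real \<Rightarrow> real) \<Rightarrow> real set \<Rightarrow> (real \<Rightarrow> real) \<Rightarrow> (real \<Rightarrow> real) \<Rightarrow> bool" where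
  "instanton_solution r I fp fm \<longleftrightarrow>
     is_interval I \<and> I \<subseteq> {0<..} \<and>
     (\<forall>t\<in>I. (fp has_real_derivative
                 (fp t / coefA r t * (1 - (coefA r t)^2 / (coefB r t)^2 - fp t)
                  + (fm t)^2 * coefA r t / (coefB r t)^2)) (at t within I)) \<and>
     (\<forall>t\<in>I. (fm has_real_derivative
                 (2 * fm t / coefA r t * (fp t - 1))) (at t within I))"

definition forward_invariant :: "(real \<Rightarrow> real) \<Rightarrow> (real \<times> real) set \<Rightarrow> bool" where
  "forward_invariant r S \<longleftrightarrow>
     (\<forall>I fp fm t0 t. instanton_solution r I fp fm \<longrightarrow> t0 \<in> I \<longrightarrow> t \<in> I \<longrightarrow> t0 \<le> t \<longrightarrow>
        (fp t0, fm t0) \<in> S \<longrightarrow> (fp t, fm t) \<in> S)"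

definition H_plus :: "(real \<times> real) set" where
  "H_plus = {(fp, fm). fm > 0}"

definition H_minus :: "(real \<times> real) set" where
  "H_minus = {(fp, fm). fm < 0}"

definition R_infty :: "(real \<times> real) set" where
  "R_infty = {(fp, fm). fp > 1 \<and> fm > 1}"

definition R_zero :: "(real \<times> real) set" where
  "R_zero = {(fp, fm). 2/3 < fp \<and> fp < 1 \<and> 0 < fm \<and> fm < 1}"

end

theory Submission
  imports Defs
begin

text \<open>Each region is cut out by finitely many strict inequalities \<open>k\<^sub>i(f\<^sub>+, f\<^sub>-) > 0\<close>
  with \<open>k\<^sub>i\<close> affine. Along a solution, each \<open>k\<^sub>i\<close> satisfies a linear differential inequality
  \<open>k\<^sub>i' \<ge> g\<^sub>i k\<^sub>i\<close> with continuous \<open>g\<^sub>i\<close> as long as the solution stays in the region, so by a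
  Gronwall argument no \<open>k\<^sub>i\<close> can be the first to reach zero. These inequalities only use
  \<open>A > 0\<close> and \<open>0 \<le> A\<^sup>2/B\<^sup>2 \<le> 1/3\<close>, which hold because \<open>A\<^sup>2/B\<^sup>2 = (1 - r\<^sup>-\<^sup>3)/3\<close>.
  For \<open>\<R>\<^sub>0\<close> we write it as \<open>{f\<^sub>+ > 2/3} \<inter> H\<^sub>+ \<inter> {f\<^sub>+ < 1, f\<^sub>- < 1}\<close>: the first two sets are
  invariant on their own, the last one only inside \<open>H\<^sub>+\<close>.\<close>

lemma deriv_ge_mult_imp_positive:
  fixes h h' g :: "real \<Rightarrow> real"
  assumes "a \<le> b"
    and cont_h: "continuous_on {a..b} h" and cont_g: "continuous_on {a..b} g"
    and deriv: "\<And>t. t \<in> {a<..<b} \<Longrightarrow> (h has_real_derivative h' t) (at t)"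
    and lower: "\<And>t. t \<in> {a<..<b} \<Longrightarrow> g t * h t \<le> h' t"
    and nonneg: "\<And>t. t \<in> {a<..<b} \<Longrightarrow> 0 \<le> h t"
    and "h a > 0"
  shows "h b > 0"
proof -
  obtain M where M: "\<And>t. t \<in> {a..b} \<Longrightarrow> - M \<le> g t"
    using compact_imp_bounded[OF compact_continuous_image[OF cont_g compact_Icc]]
    unfolding bounded_iff by (metis abs_le_iff image_eqI minus_le_iff real_norm_def)
  have "h a * exp (M * a) \<le> h b * exp (M * b)"
  proof (rule DERIV_nonneg_imp_increasing_open[OF \<open>a \<le> b\<close>])
    fix t assume "a < t" "t < b"
    then have t: "t \<in> {a<..<b}" by simp
    have "- M * h t \<le> g t * h t"
      using M[of t] nonneg[OF t] t by (intro mult_right_mono) auto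
    then have "0 \<le> (h' t + M * h t) * exp (M * t)"
      using lower[OF t] by simp
    moreover have "((\<lambda>t. h t * exp (M * t)) has_real_derivative (h' t + M * h t) * exp (M * t)) (at t)"
      by (auto intro!: derivative_eq_intros deriv[OF t] simp: algebra_simps)
    ultimately show "\<exists>y. ((\<lambda>t. h t * exp (M * t)) has_real_derivative y) (at t) \<and> 0 \<le> y"
      by blast
  qed (intro continuous_intros cont_h)
  with \<open>h a > 0\<close> show ?thesis
    by (smt (verit) exp_gt_zero mult_pos_pos zero_less_mult_iff)
qed

lemma barriers_remain_positive:
  fixes k k' g :: "'i \<Rightarrow> real \<Rightarrow> real"
  assumes "finite I"
    and cont_k: "\<And>i. i \<in> I \<Longrightarrow> continuous_on {a..b} (k i)"
    and cont_g: "\<And>i. i \<in> I \<Longrightarrow> continuous_on {a..b} (g i)"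
    and deriv: "\<And>i t. i \<in> I \<Longrightarrow> t \<in> {a<..<b} \<Longrightarrow> (k i has_real_derivative k' i t) (at t)"
    and lower: "\<And>i t. i \<in> I \<Longrightarrow> t \<in> {a<..<b} \<Longrightarrow> (\<forall>j\<in>I. k j t > 0) \<Longrightarrow>
                  g i t * k i t \<le> k' i t"
    and start: "\<And>i. i \<in> I \<Longrightarrow> k i a > 0"
    and "t \<in> {a..b}" "i \<in> I"
  shows "k i t > 0"
proof (rule ccontr)
  assume "\<not> k i t > 0"
  define S where "S = (\<Union>j\<in>I. {a..b} \<inter> k j -` {..0})"
  have "t \<in> S" unfolding S_def using \<open>\<not> k i t > 0\<close> \<open>t \<in> {a..b}\<close> \<open>i \<in> I\<close> by force
  have "closed S" unfolding S_def
    using \<open>finite I\<close> cont_k by (intro closed_UN) (auto intro: continuous_closed_preimage)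
  have "bdd_below S" unfolding S_def by (rule bdd_belowI[of _ a]) auto
  define s where "s = Inf S"
  have "s \<in> S" unfolding s_def using closed_contains_Inf \<open>bdd_below S\<close> \<open>closed S\<close> \<open>t \<in> S\<close> by blast
  then have "a \<le> s" "s \<le> b" unfolding S_def by auto
  have before_s: "\<forall>j\<in>I. k j \<tau> > 0" if "a \<le> \<tau>" "\<tau> < s" for \<tau>
  proof (rule ccontr)
    assume "\<not> (\<forall>j\<in>I. k j \<tau> > 0)"
    then have "\<tau> \<in> S" unfolding S_def using that \<open>s \<le> b\<close> by (auto simp: not_less)
    then have "s \<le> \<tau>" unfolding s_def using \<open>bdd_below S\<close> by (rule cInf_lower)
    with that show False by simp
  qed
  have "k j s > 0" if "j \<in> I" for j
  proof (rule deriv_ge_mult_imp_positive[OF \<open>a \<le> s\<close>])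
    have sub: "{a..s} \<subseteq> {a..b}" "{a<..<s} \<subseteq> {a<..<b}" using \<open>s \<le> b\<close> by auto
    show "continuous_on {a..s} (k j)" "continuous_on {a..s} (g j)"
      using cont_k[OF \<open>j \<in> I\<close>] cont_g[OF \<open>j \<in> I\<close>] sub(1) by (auto intro: continuous_on_subset)
    show "(k j has_real_derivative k' j t) (at t)" if "t \<in> {a<..<s}" for t
      using deriv \<open>j \<in> I\<close> sub(2) that by blast
    show "g j t * k j t \<le> k' j t" if "t \<in> {a<..<s}" for t
      using lower \<open>j \<in> I\<close> sub(2) that before_s by auto
    show "0 \<le> k j t" if "t \<in> {a<..<s}" for t
      using before_s[of t] \<open>j \<in> I\<close> that by fastforce
  qed (use start \<open>j \<in> I\<close> in auto)
  with \<open>s \<in> S\<close> show False unfolding S_def by force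
qed

lemma barrier_pair_remains_positive:
  fixes u v u' v' g h :: "real \<Rightarrow> real"
  assumes "continuous_on {a..b} u" "continuous_on {a..b} v"
    and "continuous_on {a..b} g" "continuous_on {a..b} h"
    and "\<And>t. t \<in> {a<..<b} \<Longrightarrow> (u has_real_derivative u' t) (at t)"
    and "\<And>t. t \<in> {a<..<b} \<Longrightarrow> (v has_real_derivative v' t) (at t)"
    and "\<And>t. t \<in> {a<..<b} \<Longrightarrow> u t > 0 \<Longrightarrow> v t > 0 \<Longrightarrow> g t * u t \<le> u' t \<and> h t * v t \<le> v' t"
    and "u a > 0" "v a > 0" "t \<in> {a..b}"
  shows "u t > 0 \<and> v t > 0"
proof -
  note pair = barriers_remain_positive[where I = UNIV and k = "\<lambda>i. if i then u else v"
      and g = "\<lambda>i. if i then g else h" and k' = "\<lambda>i. if i then u' else v'"]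
  have "(if i then u else v) t > 0" for i
    by (rule pair) (use assms in \<open>auto split: if_splits\<close>)
  from this[of True] this[of False] show ?thesis by simp
qed

lemma barrier_remains_positive:
  fixes u u' g :: "real \<Rightarrow> real"
  assumes "continuous_on {a..b} u" "continuous_on {a..b} g"
    and "\<And>t. t \<in> {a<..<b} \<Longrightarrow> (u has_real_derivative u' t) (at t)"
    and "\<And>t. t \<in> {a<..<b} \<Longrightarrow> u t > 0 \<Longrightarrow> g t * u t \<le> u' t"
    and "u a > 0" "t \<in> {a..b}"
  shows "u t > 0"
  using barrier_pair_remains_positive[of a b u u g g u' u' t] assms by blast

text \<open>\<open>\<alpha>\<close> stands for \<open>A\<^sup>2/B\<^sup>2\<close>.\<close>

locale instanton_arc =
  fixes A \<alpha> fp fm :: "real \<Rightarrow> real" and a b :: real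
  assumes le: "a \<le> b"
    and A_pos: "\<And>t. t \<in> {a..b} \<Longrightarrow> A t > 0"
    and \<alpha>_range: "\<And>t. t \<in> {a..b} \<Longrightarrow> 0 \<le> \<alpha> t \<and> \<alpha> t \<le> 1/3"
    and cont_A: "continuous_on {a..b} A" and cont_\<alpha>: "continuous_on {a..b} \<alpha>"
    and cont_fp: "continuous_on {a..b} fp" and cont_fm: "continuous_on {a..b} fm"
    and deriv_fp: "\<And>t. t \<in> {a<..<b} \<Longrightarrow>
      (fp has_real_derivative (fp t * (1 - \<alpha> t - fp t) + \<alpha> t * (fm t)\<^sup>2) / A t) (at t)"
    and deriv_fm: "\<And>t. t \<in> {a<..<b} \<Longrightarrow>
      (fm has_real_derivative 2 * fm t * (fp t - 1) / A t) (at t)"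
begin

lemma continuous_on_div_A: "continuous_on {a..b} c \<Longrightarrow> continuous_on {a..b} (\<lambda>t. c t / A t)"
  using A_pos by (intro continuous_intros cont_A) force+

lemma div_A_mono: "t \<in> {a<..<b} \<Longrightarrow> c * x \<le> y \<Longrightarrow> c / A t * x \<le> y / A t"
  using A_pos[of t] by (simp add: divide_right_mono)

lemma fm_positive:
  assumes "fm a > 0" "t \<in> {a..b}"
  shows "fm t > 0"
proof (rule barrier_remains_positive[OF cont_fm _ deriv_fm])
  show "continuous_on {a..b} (\<lambda>t. 2 * (fp t - 1) / A t)"
    by (intro continuous_on_div_A continuous_intros cont_fp)
  show "2 * (fp t - 1) / A t * fm t \<le> 2 * fm t * (fp t - 1) / A t" if "t \<in> {a<..<b}" for t
    by (simp add: field_simps)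
qed (use assms in auto)

lemma H_plus_preserved: "(fp a, fm a) \<in> H_plus \<Longrightarrow> (fp b, fm b) \<in> H_plus"
  unfolding H_plus_def using fm_positive le by simp

lemma H_minus_preserved:
  assumes "(fp a, fm a) \<in> H_minus"
  shows "(fp b, fm b) \<in> H_minus"
proof -
  have "- fm b > 0"
  proof (rule barrier_remains_positive[where u = "\<lambda>t. - fm t" and g = "\<lambda>t. 2 * (fp t - 1) / A t"])
    show "continuous_on {a..b} (\<lambda>t. 2 * (fp t - 1) / A t)"
      by (intro continuous_on_div_A continuous_intros cont_fp)
    show "((\<lambda>t. - fm t) has_real_derivative - (2 * fm t * (fp t - 1) / A t)) (at t)"
      if "t \<in> {a<..<b}" for t
      by (rule derivative_eq_intros deriv_fm[OF that] refl)+
    show "2 * (fp t - 1) / A t * - fm t \<le> - (2 * fm t * (fp t - 1) / A t)"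
      if "t \<in> {a<..<b}" for t
      by (simp add: minus_divide_left algebra_simps)
  qed (use assms le cont_fm in \<open>auto simp: H_minus_def intro!: continuous_on_minus\<close>)
  then show ?thesis unfolding H_minus_def by simp
qed

lemma fp_gt_two_thirds_preserved:
  assumes "fp a > 2/3"
  shows "fp b > 2/3"
proof -
  have "fp b - 2/3 > 0"
  proof (rule barrier_remains_positive[where u = "\<lambda>t. fp t - 2/3" and g = "\<lambda>t. (1/3 - \<alpha> t - fp t) / A t"])
    show "continuous_on {a..b} (\<lambda>t. (1/3 - \<alpha> t - fp t) / A t)"
      by (intro continuous_on_div_A continuous_intros cont_fp cont_\<alpha>)
    show "((\<lambda>t. fp t - 2/3) has_real_derivative
            (fp t * (1 - \<alpha> t - fp t) + \<alpha> t * (fm t)\<^sup>2) / A t) (at t)"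
      if "t \<in> {a<..<b}" for t
      by (rule derivative_eq_intros deriv_fp[OF that] refl | simp)+
    fix t assume t: "t \<in> {a<..<b}"
    have "fp t * (1 - \<alpha> t - fp t) + \<alpha> t * (fm t)\<^sup>2
        = (1/3 - \<alpha> t - fp t) * (fp t - 2/3) + (2/3 * (1/3 - \<alpha> t) + \<alpha> t * (fm t)\<^sup>2)"
      by (simp add: field_simps power2_eq_square)
    moreover have "0 \<le> 2/3 * (1/3 - \<alpha> t) + \<alpha> t * (fm t)\<^sup>2"
      using \<alpha>_range[of t] t by simp
    ultimately have "(1/3 - \<alpha> t - fp t) * (fp t - 2/3) \<le> fp t * (1 - \<alpha> t - fp t) + \<alpha> t * (fm t)\<^sup>2"
      by (metis le_add_same_cancel1)
    then show "(1/3 - \<alpha> t - fp t) / A t * (fp t - 2/3)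
        \<le> (fp t * (1 - \<alpha> t - fp t) + \<alpha> t * (fm t)\<^sup>2) / A t"
      by (rule div_A_mono[OF t])
  qed (use assms le cont_fp in \<open>auto intro!: continuous_on_diff\<close>)
  then show ?thesis by simp
qed

lemma R_infty_preserved:
  assumes "(fp a, fm a) \<in> R_infty"
  shows "(fp b, fm b) \<in> R_infty"
proof -
  have "fp b - 1 > 0 \<and> fm b - 1 > 0"
  proof (rule barrier_pair_remains_positive[where u = "\<lambda>t. fp t - 1" and v = "\<lambda>t. fm t - 1"
        and g = "\<lambda>t. - (fp t + \<alpha> t) / A t" and h = "\<lambda>t. 0"])
    show "continuous_on {a..b} (\<lambda>t. - (fp t + \<alpha> t) / A t)"
      by (intro continuous_on_div_A continuous_intros cont_fp cont_\<alpha>)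
    show "((\<lambda>t. fp t - 1) has_real_derivative
            (fp t * (1 - \<alpha> t - fp t) + \<alpha> t * (fm t)\<^sup>2) / A t) (at t)"
      if "t \<in> {a<..<b}" for t
      by (rule derivative_eq_intros deriv_fp[OF that] refl | simp)+
    show "((\<lambda>t. fm t - 1) has_real_derivative 2 * fm t * (fp t - 1) / A t) (at t)"
      if "t \<in> {a<..<b}" for t
      by (rule derivative_eq_intros deriv_fm[OF that] refl | simp)+
    fix t assume t: "t \<in> {a<..<b}" and "fp t - 1 > 0" "fm t - 1 > 0"
    have "fp t * (1 - \<alpha> t - fp t) + \<alpha> t * (fm t)\<^sup>2
        = - (fp t + \<alpha> t) * (fp t - 1) + \<alpha> t * ((fm t)\<^sup>2 - 1)"
      by (simp add: field_simps power2_eq_square)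
    moreover have "0 \<le> \<alpha> t * ((fm t)\<^sup>2 - 1)"
      using \<alpha>_range[of t] t \<open>fm t - 1 > 0\<close> by simp
    ultimately have "- (fp t + \<alpha> t) * (fp t - 1) \<le> fp t * (1 - \<alpha> t - fp t) + \<alpha> t * (fm t)\<^sup>2"
      by (metis le_add_same_cancel1)
    moreover have "0 \<le> 2 * fm t * (fp t - 1) / A t"
      using A_pos[of t] t \<open>fp t - 1 > 0\<close> \<open>fm t - 1 > 0\<close> by simp
    ultimately show "- (fp t + \<alpha> t) / A t * (fp t - 1)
          \<le> (fp t * (1 - \<alpha> t - fp t) + \<alpha> t * (fm t)\<^sup>2) / A t
        \<and> 0 * (fm t - 1) \<le> 2 * fm t * (fp t - 1) / A t"
      using div_A_mono[OF t] by simp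
  qed (use assms le cont_fp cont_fm in \<open>auto simp: R_infty_def intro!: continuous_on_diff\<close>)
  then show ?thesis unfolding R_infty_def by simp
qed

lemma below_one_preserved:
  assumes "fm a > 0" "fp a < 1" "fm a < 1"
  shows "fp b < 1 \<and> fm b < 1"
proof -
  have "1 - fp b > 0 \<and> 1 - fm b > 0"
  proof (rule barrier_pair_remains_positive[where u = "\<lambda>t. 1 - fp t" and v = "\<lambda>t. 1 - fm t"
        and g = "\<lambda>t. - (fp t + \<alpha> t) / A t" and h = "\<lambda>t. 0"])
    show "continuous_on {a..b} (\<lambda>t. - (fp t + \<alpha> t) / A t)"
      by (intro continuous_on_div_A continuous_intros cont_fp cont_\<alpha>)
    show "((\<lambda>t. 1 - fp t) has_real_derivative
            - (fp t * (1 - \<alpha> t - fp t) + \<alpha> t * (fm t)\<^sup>2) / A t) (at t)"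
      if "t \<in> {a<..<b}" for t
      by (rule derivative_eq_intros deriv_fp[OF that] refl | simp add: minus_divide_left)+
    show "((\<lambda>t. 1 - fm t) has_real_derivative - (2 * fm t * (fp t - 1) / A t)) (at t)"
      if "t \<in> {a<..<b}" for t
      by (rule derivative_eq_intros deriv_fm[OF that] refl | simp)+
    fix t assume t: "t \<in> {a<..<b}" and "1 - fp t > 0" "1 - fm t > 0"
    have "fm t > 0"
      using fm_positive[OF \<open>fm a > 0\<close>] t by simp
    have "- (fp t * (1 - \<alpha> t - fp t) + \<alpha> t * (fm t)\<^sup>2)
        = - (fp t + \<alpha> t) * (1 - fp t) + \<alpha> t * (1 - (fm t)\<^sup>2)"
      by (simp add: field_simps power2_eq_square)
    moreover have "0 \<le> \<alpha> t * (1 - (fm t)\<^sup>2)"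
      using \<alpha>_range[of t] t \<open>fm t > 0\<close> \<open>1 - fm t > 0\<close> by (simp add: power_le_one)
    ultimately have "- (fp t + \<alpha> t) * (1 - fp t) \<le> - (fp t * (1 - \<alpha> t - fp t) + \<alpha> t * (fm t)\<^sup>2)"
      by (metis le_add_same_cancel1)
    moreover have "0 \<le> - (2 * fm t * (fp t - 1) / A t)"
      using A_pos[of t] t \<open>fm t > 0\<close> \<open>1 - fp t > 0\<close>
      by (simp add: divide_nonpos_pos mult_nonneg_nonpos)
    ultimately show "- (fp t + \<alpha> t) / A t * (1 - fp t)
          \<le> - (fp t * (1 - \<alpha> t - fp t) + \<alpha> t * (fm t)\<^sup>2) / A t
        \<and> 0 * (1 - fm t) \<le> - (2 * fm t * (fp t - 1) / A t)"
      using div_A_mono[OF t] by simp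
  qed (use assms le cont_fp cont_fm in \<open>auto intro!: continuous_on_diff continuous_on_minus\<close>)
  then show ?thesis by simp
qed

lemma R_zero_preserved: "(fp a, fm a) \<in> R_zero \<Longrightarrow> (fp b, fm b) \<in> R_zero"
  unfolding R_zero_def using fp_gt_two_thirds_preserved fm_positive below_one_preserved le by auto

end

lemma coefA_pos: "r t > 1 \<Longrightarrow> coefA r t > 0"
  unfolding coefA_def by simp

lemma coefB_pos: "r t > 0 \<Longrightarrow> coefB r t > 0"
  unfolding coefB_def by simp

lemma coef_ratio_eq:
  assumes "r t > 1"
  shows "(coefA r t)\<^sup>2 / (coefB r t)\<^sup>2 = (1 - 1 / r t ^ 3) / 3"
proof -
  have "1 / r t ^ 3 \<le> 1" using assms by simp
  then have "(coefA r t)\<^sup>2 = (r t)\<^sup>2 / 9 * (1 - 1 / r t ^ 3)"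
    unfolding coefA_def by (simp add: power_mult_distrib power_divide)
  moreover have "(coefB r t)\<^sup>2 = (r t)\<^sup>2 / 3"
    unfolding coefB_def by (simp add: power_divide)
  ultimately show ?thesis using assms by (simp only:) (simp add: field_simps)
qed

lemma coef_ratio_bounds:
  "r t > 1 \<Longrightarrow> 0 \<le> (coefA r t)\<^sup>2 / (coefB r t)\<^sup>2 \<and> (coefA r t)\<^sup>2 / (coefB r t)\<^sup>2 \<le> 1/3"
  by (simp add: coef_ratio_eq)

lemma instanton_rhs_eq:
  fixes x y A B :: real
  assumes "A \<noteq> 0"
  shows "x / A * (1 - A\<^sup>2 / B\<^sup>2 - x) + y\<^sup>2 * A / B\<^sup>2 = (x * (1 - A\<^sup>2 / B\<^sup>2 - x) + A\<^sup>2 / B\<^sup>2 * y\<^sup>2) / A"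
  using assms by (simp add: field_simps power2_eq_square)

lemma instanton_solution_continuous:
  assumes "instanton_solution r I fp fm"
  shows "continuous_on I fp" "continuous_on I fm"
  using assms DERIV_continuous unfolding instanton_solution_def continuous_on_eq_continuous_within
  by blast+

context
  fixes r :: "real \<Rightarrow> real"
  assumes r_gt1: "\<forall>t>0. r t > 1"
    and cont_A: "continuous_on {0<..} (coefA r)"
    and cont_B: "continuous_on {0<..} (coefB r)"
begin

lemma instanton_arc_of_solution:
  assumes sol: "instanton_solution r I fp fm" and "t0 \<in> I" "t1 \<in> I" "t0 \<le> t1"
  shows "instanton_arc (coefA r) (\<lambda>t. (coefA r t)\<^sup>2 / (coefB r t)\<^sup>2) fp fm t0 t1"
proof -
  have "is_interval I" "I \<subseteq> {0<..}"
    and dfp: "\<And>t. t \<in> I \<Longrightarrow> (fp has_real_derivative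
                 (fp t / coefA r t * (1 - (coefA r t)\<^sup>2 / (coefB r t)\<^sup>2 - fp t)
                  + (fm t)\<^sup>2 * coefA r t / (coefB r t)\<^sup>2)) (at t within I)"
    and dfm: "\<And>t. t \<in> I \<Longrightarrow> (fm has_real_derivative
                 (2 * fm t / coefA r t * (fp t - 1))) (at t within I)"
    using sol unfolding instanton_solution_def by auto
  have sub: "{t0..t1} \<subseteq> I"
    using \<open>is_interval I\<close> \<open>t0 \<in> I\<close> \<open>t1 \<in> I\<close> unfolding is_interval_1
    by (meson atLeastAtMost_iff subsetI)
  with \<open>I \<subseteq> {0<..}\<close> have pos: "{t0..t1} \<subseteq> {0<..}" by blast
  have r_gt1_Icc: "r t > 1" if "t \<in> {t0..t1}" for t
    using r_gt1 pos that by blast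
  have "{t0<..<t1} \<subseteq> interior I"
    using interior_mono[OF sub] by simp
  then have at_eq: "at t within I = at t" if "t \<in> {t0<..<t1}" for t
    using that at_within_interior by blast
  show ?thesis
  proof
    have "coefB r t \<noteq> 0" if "t \<in> {t0..t1}" for t
      using coefB_pos[of r t] r_gt1_Icc[OF that] by simp
    then show "continuous_on {t0..t1} (\<lambda>t. (coefA r t)\<^sup>2 / (coefB r t)\<^sup>2)"
      by (intro continuous_intros continuous_on_subset[OF cont_A pos] continuous_on_subset[OF cont_B pos]) auto
    show "continuous_on {t0..t1} fp" "continuous_on {t0..t1} fm"
      by (metis continuous_on_subset instanton_solution_continuous sol sub)+
    fix t assume t: "t \<in> {t0<..<t1}"
    then have "t \<in> I" "coefA r t \<noteq> 0" using sub r_gt1_Icc[of t] coefA_pos[of r t] by auto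
    show "(fp has_real_derivative (fp t * (1 - (coefA r t)\<^sup>2 / (coefB r t)\<^sup>2 - fp t)
            + (coefA r t)\<^sup>2 / (coefB r t)\<^sup>2 * (fm t)\<^sup>2) / coefA r t) (at t)"
      using dfp[OF \<open>t \<in> I\<close>] unfolding at_eq[OF t] instanton_rhs_eq[OF \<open>coefA r t \<noteq> 0\<close>] .
    show "(fm has_real_derivative 2 * fm t * (fp t - 1) / coefA r t) (at t)"
      using dfm[OF \<open>t \<in> I\<close>] at_eq[OF t] by simp
  qed (use \<open>t0 \<le> t1\<close> continuous_on_subset[OF cont_A pos] r_gt1_Icc coefA_pos coef_ratio_bounds in auto)
qed

lemma forward_invariantI:
  assumes "\<And>fp fm a b. instanton_arc (coefA r) (\<lambda>t. (coefA r t)\<^sup>2 / (coefB r t)\<^sup>2) fp fm a b \<Longrightarrow>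
             (fp a, fm a) \<in> S \<Longrightarrow> (fp b, fm b) \<in> S"
  shows "forward_invariant r S"
  unfolding forward_invariant_def
proof (intro allI impI)
  fix I fp fm t0 t1
  assume "instanton_solution r I fp fm" "t0 \<in> I" "t1 \<in> I" "t0 \<le> t1" "(fp t0, fm t0) \<in> S"
  then show "(fp t1, fm t1) \<in> S"
    by (rule assms[OF instanton_arc_of_solution])
qed

end

theorem mainTheorem3:
  fixes r :: "real \<Rightarrow> real"
  assumes r_gt1: "\<forall>t>0. r t > 1"
    and dA: "\<forall>t>0. ((coefA r) has_real_derivative
                 (1/2 * (1 - (coefA r t)^2 / (coefB r t)^2))) (at t)"
    and dB: "\<forall>t>0. ((coefB r) has_real_derivative (coefA r t / coefB r t)) (at t)"
    and r_lim: "(r \<longlongrightarrow> 1) (at_right 0)"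
  shows "forward_invariant r H_plus \<and> forward_invariant r H_minus \<and>
         forward_invariant r R_infty \<and> forward_invariant r R_zero"
proof -
  have "continuous_on {0<..} (coefA r)" "continuous_on {0<..} (coefB r)"
    using dA dB by (auto simp: continuous_on_eq_continuous_at intro: DERIV_isCont)
  note invariant = forward_invariantI[OF r_gt1 this]
  have "forward_invariant r H_plus" by (rule invariant) (rule instanton_arc.H_plus_preserved)
  moreover have "forward_invariant r H_minus" by (rule invariant) (rule instanton_arc.H_minus_preserved)
  moreover have "forward_invariant r R_infty" by (rule invariant) (rule instanton_arc.R_infty_preserved)
  moreover have "forward_invariant r R_zero" by (rule invariant) (rule instanton_arc.R_zero_preserved)
  ultimately show ?thesis by blast
qed

end
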